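(* Let $1\to H\to\Gamma\xrightarrow{\pi}K\to1$ be a short exact sequence of groups where $H$ is amenable, $\Gamma$ is finitely generated and $K$ is extraterrestrial. Then $\Gamma$ is extraterrestrial.
   Context: A finitely generated group is extraterrestrial if its Cayley graph with respect to some (equivalently any) finite symmetric generating set is extraterrestrial. A graph $G=(V,E)$ is extraterrestrial if for every $m$ there is $k$ such that for every $r$ there is a triple $(U,F,O)$ of pairwise disjoint finite vertex sets with $U\neq\emptyset$, $|U|\ge m|F|$, a bijection $\mu:U\to O$ with $d_G(u,\mu(u))\le k$, and every path from $U$ to $O$ either contains a vertex of $F$ or has length at least $r$. *)

theory Defs
  imports "HOL-Algebra.Algebra"
begin

definition is_walk :: "'a set \<Rightarrow> ('a \<Rightarrow> 'a \<Rightarrow> bool) \<Rightarrow> 'a list \<Rightarrow> bool" where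
  "is_walk V E xs \<longleftrightarrow> xs \<noteq> [] \<and> set xs \<subseteq> V \<and>
     (\<forall>i. Suc i < length xs \<longrightarrow> E (xs ! i) (xs ! Suc i))"

definition walk_len :: "'a list \<Rightarrow> nat" where
  "walk_len xs = length xs - 1"

definition dist_le :: "'a set \<Rightarrow> ('a \<Rightarrow> 'a \<Rightarrow> bool) \<Rightarrow> 'a \<Rightarrow> 'a \<Rightarrow> nat \<Rightarrow> bool" where
  "dist_le V E u v k \<longleftrightarrow>
     (\<exists>xs. is_walk V E xs \<and> hd xs = u \<and> last xs = v \<and> walk_len xs \<le> k)"

definition extraterrestrial :: "'a set \<Rightarrow> ('a \<Rightarrow> 'a \<Rightarrow> bool) \<Rightarrow> bool" where
  "extraterrestrial V E \<longleftrightarrow>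
    (\<forall>m::nat. \<exists>k::nat. \<forall>r::nat. \<exists>U F W.
       U \<subseteq> V \<and> F \<subseteq> V \<and> W \<subseteq> V \<and>
       finite U \<and> finite F \<and> finite W \<and>
       U \<inter> F = {} \<and> U \<inter> W = {} \<and> F \<inter> W = {} \<and>
       U \<noteq> {} \<and> card U \<ge> m * card F \<and>
       (\<exists>\<mu>. bij_betw \<mu> U W \<and> (\<forall>u\<in>U. dist_le V E u (\<mu> u) k)) \<and>
       (\<forall>xs. is_walk V E xs \<and> hd xs \<in> U \<and> last xs \<in> W \<longrightarrow>
              set xs \<inter> F \<noteq> {} \<or> walk_len xs \<ge> r))"

definition cayley_adj :: "('a, 'b) monoid_scheme \<Rightarrow> 'a set \<Rightarrow> 'a \<Rightarrow> 'a \<Rightarrow> bool" where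
  "cayley_adj G S g h \<longleftrightarrow> (\<exists>s\<in>S. h = g \<otimes>\<^bsub>G\<^esub> s)"

definition finite_symmetric_generating_set :: "('a, 'b) monoid_scheme \<Rightarrow> 'a set \<Rightarrow> bool" where
  "finite_symmetric_generating_set G S \<longleftrightarrow>
     finite S \<and> S \<subseteq> carrier G \<and> (\<forall>s\<in>S. inv\<^bsub>G\<^esub> s \<in> S) \<and> generate G S = carrier G"

definition finitely_generated_group :: "('a, 'b) monoid_scheme \<Rightarrow> bool" where
  "finitely_generated_group G \<longleftrightarrow>
     (\<exists>S. finite S \<and> S \<subseteq> carrier G \<and> generate G S = carrier G)"

text \<open>Extraterrestrial group: the Cayley graph w.r.t. some finite symmetric
  generating set is extraterrestrial (the paper notes this is equivalent to "any").\<close>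
definition extraterrestrial_group :: "('a, 'b) monoid_scheme \<Rightarrow> bool" where
  "extraterrestrial_group G \<longleftrightarrow>
     (\<exists>S. finite_symmetric_generating_set G S \<and> extraterrestrial (carrier G) (cayley_adj G S))"

definition amenable_group :: "('a, 'b) monoid_scheme \<Rightarrow> bool" where
  "amenable_group G \<longleftrightarrow>
     (\<exists>\<mu> :: 'a set \<Rightarrow> real.
        (\<forall>A. A \<subseteq> carrier G \<longrightarrow> \<mu> A \<ge> 0) \<and>
        \<mu> (carrier G) = 1 \<and>
        (\<forall>A B. A \<subseteq> carrier G \<longrightarrow> B \<subseteq> carrier G \<longrightarrow> A \<inter> B = {} \<longrightarrow>
               \<mu> (A \<union> B) = \<mu> A + \<mu> B) \<and>
        (\<forall>g\<in>carrier G. \<forall>A. A \<subseteq> carrier G \<longrightarrow> \<mu> (g <#\<^bsub>G\<^esub> A) = \<mu> A))"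

end

theory Submission
  imports Defs
begin

(* Write N for the kernel of pi, the image of H. Because H is amenable, every finite D inside N
   admits a finite nonempty A inside N with |A D| <= 2 |A|: otherwise Hall's marriage theorem
   would split H into two disjoint piecewise left translates of itself, both of invariant
   mean 1. Given a separating triple (U, F, W) of K for the constant 2m, lift it through a
   section sigma of pi: U' = A sigma(U), W' = the endpoints of the lifted matching paths, and
   F' = A D sigma(F), where D collects the kernel elements sigma(u) w sigma(u pi(w))^-1 met by
   words w of length at most r. A short walk from U' to W' projects to a short walk from U to
   W, which meets F; the corresponding vertex of the walk then lies in F'. Finally
   |U'| = |A| |U| >= 2m |A| |F| >= m |F'|. *)

section \<open>Hall's marriage theorem for families with finite neighbourhoods\<close>

definition hall_condition :: "'a set \<Rightarrow> ('a \<times> 'b) set \<Rightarrow> bool" where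
  "hall_condition V R \<longleftrightarrow> (\<forall>L. finite L \<and> L \<subseteq> V \<longrightarrow> card L \<le> card (R `` L))"

lemma finite_Image_of_finite_fibres:
  assumes "\<And>x. x \<in> V \<Longrightarrow> finite (R `` {x})" "finite L" "L \<subseteq> V"
  shows "finite (R `` L)"
  using assms by (subst Image_eq_UN) blast

lemma hall_condition_Union_chain:
  assumes fibres: "\<And>x. x \<in> V \<Longrightarrow> finite (R `` {x})"
    and chain: "subset.chain {D. D \<subseteq> R \<and> hall_condition V (R - D)} C" and "C \<noteq> {}"
  shows "hall_condition V (R - \<Union>C)"
  unfolding hall_condition_def
proof (intro allI impI)
  fix L assume L: "finite L \<and> L \<subseteq> V"
  define E where "E = L \<times> (R `` L)"
  have finite_Image: "finite (R `` L)"
    using finite_Image_of_finite_fibres[OF fibres] L by blast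
  then have "finite E"
    using L by (simp add: E_def)
  then obtain D0 where D0: "D0 \<in> C" "E \<inter> \<Union>C \<subseteq> D0"
    using finite_subset_Union_chain[OF _ _ \<open>C \<noteq> {}\<close> chain, of "E \<inter> \<Union>C"] by blast
  have "hall_condition V (R - D0)"
    using chain D0(1) unfolding subset_chain_def by blast
  then have "card L \<le> card ((R - D0) `` L)"
    using L by (simp add: hall_condition_def)
  also have "\<dots> \<le> card ((R - \<Union>C) `` L)"
  proof (rule card_mono)
    show "finite ((R - \<Union>C) `` L)"
      by (rule finite_subset[OF _ finite_Image]) blast
    show "(R - D0) `` L \<subseteq> (R - \<Union>C) `` L"
    proof
      fix y assume "y \<in> (R - D0) `` L"
      then obtain x where "x \<in> L" "(x, y) \<in> R" "(x, y) \<notin> D0"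
        by blast
      moreover from this have "(x, y) \<in> E"
        by (auto simp: E_def)
      ultimately show "y \<in> (R - \<Union>C) `` L"
        using D0(2) by blast
    qed
  qed
  finally show "card L \<le> card ((R - \<Union>C) `` L)" .
qed

lemma minimal_hall_subrelation:
  assumes "\<And>x. x \<in> V \<Longrightarrow> finite (R `` {x})" and "hall_condition V R"
  obtains R' where "R' \<subseteq> R" "hall_condition V R'" "\<And>p. p \<in> R' \<Longrightarrow> \<not> hall_condition V (R' - {p})"
proof -
  let ?A = "{D. D \<subseteq> R \<and> hall_condition V (R - D)}"
  have "\<exists>M\<in>?A. \<forall>D\<in>?A. M \<subseteq> D \<longrightarrow> D = M"
  proof (rule subset_Zorn_nonempty)
    have "{} \<in> ?A"
      using assms(2) by simp
    then show "?A \<noteq> {}"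
      by blast
    show "\<Union>C \<in> ?A" if "C \<noteq> {}" "subset.chain ?A C" for C
    proof
      show "\<Union>C \<subseteq> R \<and> hall_condition V (R - \<Union>C)"
        using hall_condition_Union_chain[OF assms(1) that(2,1)] that(2)
        unfolding subset_chain_def by blast
    qed
  qed
  then obtain M where "M \<in> ?A" and max: "\<forall>D\<in>?A. M \<subseteq> D \<longrightarrow> D = M"
    by blast
  then have M: "M \<subseteq> R" "hall_condition V (R - M)"
    by simp_all
  have maximal: "D = M" if "D \<subseteq> R" "hall_condition V (R - D)" "M \<subseteq> D" for D
  proof -
    have "D \<in> ?A"
      using that(1,2) by simp
    with max that(3) show ?thesis
      by simp
  qed
  have "\<not> hall_condition V (R - M - {p})" if "p \<in> R - M" for p
  proof
    assume "hall_condition V (R - M - {p})"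
    moreover have "R - insert p M = R - M - {p}"
      by blast
    ultimately have "hall_condition V (R - insert p M)"
      by simp
    then have "insert p M = M"
      using that M(1) by (intro maximal) blast+
    then show False
      using that by blast
  qed
  moreover have "R - M \<subseteq> R"
    by blast
  ultimately show thesis
    using that M(2) by blast
qed

lemma hall_critical_set:
  assumes hall: "hall_condition V R" and critical: "\<not> hall_condition V (R - {(x, y)})"
    and "(x, y) \<in> R"
  obtains L where "finite L" "L \<subseteq> V" "x \<in> L" "card ((R - {(x, y)}) `` L) < card L"
proof -
  obtain L where L: "finite L" "L \<subseteq> V" "card ((R - {(x, y)}) `` L) < card L"
    using critical by (auto simp: hall_condition_def not_le)
  have "x \<in> L"
  proof (rule ccontr)
    assume "x \<notin> L"
    then have "(R - {(x, y)}) `` L = R `` L"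
      by blast
    moreover have "card L \<le> card (R `` L)"
      using hall L(1,2) unfolding hall_condition_def by blast
    ultimately show False
      using L(3) by simp
  qed
  with L that show thesis
    by blast
qed

text \<open>Two critical sets through x would, by submodularity of L \<mapsto> card (R `` L), violate
  Hall's condition on their union.\<close>
lemma minimal_hall_relation_functional:
  assumes fibres: "\<And>x. x \<in> V \<Longrightarrow> finite (R `` {x})" and hall: "hall_condition V R"
    and minimal: "\<And>p. p \<in> R \<Longrightarrow> \<not> hall_condition V (R - {p})"
    and "(x, y1) \<in> R" "(x, y2) \<in> R"
  shows "y1 = y2"
proof (rule ccontr)
  assume "y1 \<noteq> y2"
  obtain L1 where L1: "finite L1" "L1 \<subseteq> V" "x \<in> L1" "card ((R - {(x, y1)}) `` L1) < card L1"
    using hall_critical_set[OF hall minimal] assms(4) by blast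
  obtain L2 where L2: "finite L2" "L2 \<subseteq> V" "x \<in> L2" "card ((R - {(x, y2)}) `` L2) < card L2"
    using hall_critical_set[OF hall minimal] assms(5) by blast
  define P where "P = (R - {(x, y1)}) `` L1"
  define Q where "Q = (R - {(x, y2)}) `` L2"
  have P: "finite P"
    unfolding P_def by (rule finite_subset[OF _ finite_Image_of_finite_fibres[OF fibres L1(1,2)]]) blast
  have Q: "finite Q"
    unfolding Q_def by (rule finite_subset[OF _ finite_Image_of_finite_fibres[OF fibres L2(1,2)]]) blast
  have "R `` (L1 \<union> L2) \<subseteq> P \<union> Q"
  proof
    fix z assume "z \<in> R `` (L1 \<union> L2)"
    then obtain w where "w \<in> L1 \<union> L2" "(w, z) \<in> R"
      by blast
    then show "z \<in> P \<union> Q"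
      using \<open>y1 \<noteq> y2\<close> L1(3) L2(3) unfolding P_def Q_def by (cases "w = x") blast+
  qed
  then have "card (R `` (L1 \<union> L2)) \<le> card (P \<union> Q)"
    using P Q by (intro card_mono) blast+
  moreover have "finite (L1 \<union> L2)" "L1 \<union> L2 \<subseteq> V"
    using L1(1,2) L2(1,2) by auto
  then have "card (L1 \<union> L2) \<le> card (R `` (L1 \<union> L2))"
    using hall unfolding hall_condition_def by blast
  ultimately have union: "card (L1 \<union> L2) \<le> card (P \<union> Q)"
    by linarith
  have "R `` (L1 \<inter> L2 - {x}) \<subseteq> P \<inter> Q"
    unfolding P_def Q_def by blast
  then have "card (R `` (L1 \<inter> L2 - {x})) \<le> card (P \<inter> Q)"
    using P by (intro card_mono) blast+
  moreover have "finite (L1 \<inter> L2 - {x})" "L1 \<inter> L2 - {x} \<subseteq> V"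
    using L1(1,2) by auto
  then have "card (L1 \<inter> L2 - {x}) \<le> card (R `` (L1 \<inter> L2 - {x}))"
    using hall unfolding hall_condition_def by blast
  ultimately have inter: "card (L1 \<inter> L2 - {x}) \<le> card (P \<inter> Q)"
    by linarith
  have "card (L1 \<inter> L2 - {x}) + 1 = card (L1 \<inter> L2)"
    using card_Suc_Diff1[of "L1 \<inter> L2" x] L1(1,3) L2(3) by simp
  then show False
    using union inter card_Un_Int[OF P Q] card_Un_Int[OF L1(1) L2(1)] L1(4) L2(4)
    unfolding P_def[symmetric] Q_def[symmetric] by linarith
qed

theorem infinite_hall_marriage:
  assumes fibres: "\<And>x. x \<in> V \<Longrightarrow> finite (R `` {x})" and hall: "hall_condition V R"
  obtains f where "inj_on f V" "\<And>x. x \<in> V \<Longrightarrow> (x, f x) \<in> R"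
proof -
  obtain R' where R': "R' \<subseteq> R" "hall_condition V R'"
    and minimal: "\<And>p. p \<in> R' \<Longrightarrow> \<not> hall_condition V (R' - {p})"
    using minimal_hall_subrelation[OF fibres hall] by blast
  have fibres': "finite (R' `` {x})" if "x \<in> V" for x
    using fibres[OF that] R'(1) by (meson Image_mono finite_subset order_refl)
  have unique: "y1 = y2" if "(x, y1) \<in> R'" "(x, y2) \<in> R'" for x y1 y2
    using minimal_hall_relation_functional[OF fibres' R'(2) minimal that] .
  have card_Image: "card L \<le> card (R' `` L)" if "finite L" "L \<subseteq> V" for L
    using R'(2) that by (simp add: hall_condition_def)
  define f where "f x = (SOME y. (x, y) \<in> R')" for x
  have f: "(x, f x) \<in> R'" if "x \<in> V" for x
  proof -
    have "R' `` {x} \<noteq> {}"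
      using card_Image[of "{x}"] that by auto
    then show ?thesis
      unfolding f_def by (auto intro: someI)
  qed
  have "inj_on f V"
  proof (rule inj_onI, rule ccontr)
    fix x1 x2 assume x: "x1 \<in> V" "x2 \<in> V" "f x1 = f x2" "x1 \<noteq> x2"
    have "R' `` {x1, x2} \<subseteq> {f x1}"
    proof
      fix z assume "z \<in> R' `` {x1, x2}"
      then have "(x1, z) \<in> R' \<or> (x2, z) \<in> R'"
        by blast
      then show "z \<in> {f x1}"
        using unique f[OF x(1)] f[OF x(2)] x(3) by fastforce
    qed
    then have "card (R' `` {x1, x2}) \<le> 1"
      using card_mono[of "{f x1}"] by fastforce
    then show False
      using card_Image[of "{x1, x2}"] x by simp
  qed
  then show thesis
    using that f R'(1) by blast
qed

section \<open>Doubling sets in amenable groups\<close>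

definition left_invariant_mean :: "('a, 'b) monoid_scheme \<Rightarrow> ('a set \<Rightarrow> real) \<Rightarrow> bool" where
  "left_invariant_mean G \<mu> \<longleftrightarrow>
     (\<forall>A. A \<subseteq> carrier G \<longrightarrow> \<mu> A \<ge> 0) \<and>
     \<mu> (carrier G) = 1 \<and>
     (\<forall>A B. A \<subseteq> carrier G \<longrightarrow> B \<subseteq> carrier G \<longrightarrow> A \<inter> B = {} \<longrightarrow>
            \<mu> (A \<union> B) = \<mu> A + \<mu> B) \<and>
     (\<forall>g\<in>carrier G. \<forall>A. A \<subseteq> carrier G \<longrightarrow> \<mu> (g <#\<^bsub>G\<^esub> A) = \<mu> A)"

lemma amenable_group_iff_left_invariant_mean:
  "amenable_group G \<longleftrightarrow> (\<exists>\<mu>. left_invariant_mean G \<mu>)"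
  unfolding amenable_group_def left_invariant_mean_def ..

lemma additive_UN_disjoint:
  fixes \<mu> :: "'a set \<Rightarrow> real"
  assumes additive: "\<And>A B. A \<subseteq> C \<Longrightarrow> B \<subseteq> C \<Longrightarrow> A \<inter> B = {} \<Longrightarrow> \<mu> (A \<union> B) = \<mu> A + \<mu> B"
    and "finite I" "\<And>i. i \<in> I \<Longrightarrow> B i \<subseteq> C"
    and "\<And>i j. i \<in> I \<Longrightarrow> j \<in> I \<Longrightarrow> i \<noteq> j \<Longrightarrow> B i \<inter> B j = {}"
  shows "\<mu> (\<Union>i\<in>I. B i) = (\<Sum>i\<in>I. \<mu> (B i))"
  using assms(2-4)
proof (induction I rule: finite_induct)
  case empty
  have "\<mu> ({} \<union> {}) = \<mu> {} + \<mu> {}"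
    by (rule additive) simp_all
  then show ?case
    by simp
next
  case (insert i I)
  have "B i \<inter> (\<Union>j\<in>I. B j) = {}"
    using insert.prems(2) insert.hyps(2) by fastforce
  then have "\<mu> (B i \<union> (\<Union>j\<in>I. B j)) = \<mu> (B i) + \<mu> (\<Union>j\<in>I. B j)"
    using insert.prems(1) by (intro additive) auto
  then show ?case
    using insert by simp
qed

lemma finite_set_mult: "finite A \<Longrightarrow> finite B \<Longrightarrow> finite (A <#>\<^bsub>G\<^esub> B)"
  unfolding set_mult_def by simp

lemma card_set_mult_le: "finite A \<Longrightarrow> finite B \<Longrightarrow> card (A <#>\<^bsub>G\<^esub> B) \<le> card A * card B"
proof -
  assume "finite A" "finite B"
  have "A <#>\<^bsub>G\<^esub> B = (\<lambda>(a, b). a \<otimes>\<^bsub>G\<^esub> b) ` (A \<times> B)"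
    unfolding set_mult_def by auto
  then show ?thesis
    using card_image_le[of "A \<times> B" "\<lambda>(a, b). a \<otimes>\<^bsub>G\<^esub> b"] \<open>finite A\<close> \<open>finite B\<close>
    by (simp add: card_cartesian_product)
qed

context group
begin

lemma translation_matching:
  assumes T: "finite T" "T \<subseteq> carrier G"
    and expanding: "\<And>A. finite A \<Longrightarrow> A \<noteq> {} \<Longrightarrow> A \<subseteq> carrier G \<Longrightarrow> 2 * card A < card (T <#> A)"
  obtains f where "inj_on f (carrier G \<times> (UNIV :: bool set))"
    and "\<And>x b. x \<in> carrier G \<Longrightarrow> \<exists>t\<in>T. f (x, b) = t \<otimes> x"
proof -
  define R where "R = {((x, b :: bool), t \<otimes> x) | x b t. x \<in> carrier G \<and> t \<in> T}"
  have R_Image: "R `` L = T <#> fst ` L" if "L \<subseteq> carrier G \<times> UNIV" for L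
    using that unfolding R_def set_mult_def by force
  have fibres: "finite (R `` {p})" if "p \<in> carrier G \<times> UNIV" for p
    using R_Image[of "{p}"] that T(1) by (simp add: set_mult_def)
  have hall: "hall_condition (carrier G \<times> UNIV) R"
    unfolding hall_condition_def
  proof (intro allI impI)
    fix L assume L: "finite L \<and> L \<subseteq> carrier G \<times> (UNIV :: bool set)"
    show "card L \<le> card (R `` L)"
    proof (cases "L = {}")
      case False
      have "card L \<le> card (fst ` L \<times> (UNIV :: bool set))"
        using L by (intro card_mono) force+
      also have "\<dots> = 2 * card (fst ` L)"
        by (simp add: card_cartesian_product)
      also have "\<dots> < card (T <#> fst ` L)"
        using L False by (intro expanding) auto
      finally show ?thesis
        using R_Image L by simp
    qed simp
  qed
  obtain f where f: "inj_on f (carrier G \<times> UNIV)"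
    and "\<And>p. p \<in> carrier G \<times> UNIV \<Longrightarrow> (p, f p) \<in> R"
    using infinite_hall_marriage[OF fibres hall] by blast
  then have "\<exists>t\<in>T. f (x, b) = t \<otimes> x" if "x \<in> carrier G" for x b
    using that unfolding R_def by blast
  with f show thesis
    by (rule that)
qed

lemma left_invariant_mean_piecewise_translate:
  assumes mean: "left_invariant_mean G \<mu>" and T: "finite T" "T \<subseteq> carrier G"
    and g: "inj_on g (carrier G)" "\<And>x. x \<in> carrier G \<Longrightarrow> \<exists>t\<in>T. g x = t \<otimes> x"
  shows "\<mu> (g ` carrier G) = 1"
proof -
  have additive: "\<And>A B. A \<subseteq> carrier G \<Longrightarrow> B \<subseteq> carrier G \<Longrightarrow> A \<inter> B = {} \<Longrightarrow> \<mu> (A \<union> B) = \<mu> A + \<mu> B"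
    and invariant: "\<And>t A. t \<in> carrier G \<Longrightarrow> A \<subseteq> carrier G \<Longrightarrow> \<mu> (t <# A) = \<mu> A"
    and "\<mu> (carrier G) = 1"
    using mean by (simp_all add: left_invariant_mean_def)
  define P where "P t = {x \<in> carrier G. g x = t \<otimes> x}" for t
  have P_carrier: "P t \<subseteq> carrier G" for t
    by (auto simp: P_def)
  have P_disjoint: "P t \<inter> P t' = {}" if "t \<in> T" "t' \<in> T" "t \<noteq> t'" for t t'
    using that T(2) by (auto simp: P_def r_cancel subset_iff)
  have translate: "g ` P t = t <# P t" for t
    by (force simp: P_def l_coset_def)
  have cover: "carrier G = (\<Union>t\<in>T. P t)"
    using g(2) by (auto simp: P_def)
  have "\<mu> (\<Union>t\<in>T. P t) = (\<Sum>t\<in>T. \<mu> (P t))"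
    by (rule additive_UN_disjoint[OF additive T(1) P_carrier P_disjoint])
  also have "\<dots> = (\<Sum>t\<in>T. \<mu> (t <# P t))"
    by (rule sum.cong[OF refl], rule invariant[symmetric]) (use T(2) P_carrier in blast)+
  also have "\<dots> = \<mu> (\<Union>t\<in>T. t <# P t)"
  proof (rule additive_UN_disjoint[OF additive T(1), symmetric])
    show "t <# P t \<subseteq> carrier G" if "t \<in> T" for t
      using that T(2) P_carrier by (intro l_coset_subset_G) blast+
    show "(t <# P t) \<inter> (t' <# P t') = {}" if "t \<in> T" "t' \<in> T" "t \<noteq> t'" for t t'
      unfolding translate[symmetric] inj_on_image_Int[OF g(1) P_carrier P_carrier, symmetric]
      using P_disjoint[OF that] by simp
  qed
  also have "(\<Union>t\<in>T. t <# P t) = g ` carrier G"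
    unfolding translate[symmetric] cover by blast
  finally show ?thesis
    using \<open>\<mu> (carrier G) = 1\<close> cover by simp
qed

text \<open>Hall's theorem turns an expanding T into two disjoint piecewise translates of G, each of
  full mean.\<close>
lemma left_invariant_mean_not_expanding:
  assumes mean: "left_invariant_mean G \<mu>" and T: "finite T" "T \<subseteq> carrier G"
    and expanding: "\<And>A. finite A \<Longrightarrow> A \<noteq> {} \<Longrightarrow> A \<subseteq> carrier G \<Longrightarrow> 2 * card A < card (T <#> A)"
  shows False
proof -
  obtain f where f: "inj_on f (carrier G \<times> (UNIV :: bool set))"
    "\<And>x b. x \<in> carrier G \<Longrightarrow> \<exists>t\<in>T. f (x, b) = t \<otimes> x"
    using translation_matching[OF T expanding] by blast
  define Img where "Img b = (\<lambda>x. f (x, b)) ` carrier G" for b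
  have Img_carrier: "Img b \<subseteq> carrier G" for b
  proof (unfold Img_def, rule image_subsetI)
    fix x assume x: "x \<in> carrier G"
    then obtain t where "t \<in> T" "f (x, b) = t \<otimes> x"
      using f(2) by blast
    then show "f (x, b) \<in> carrier G"
      using x T(2) by auto
  qed
  have Img_mean: "\<mu> (Img b) = 1" for b
    unfolding Img_def using f T
    by (intro left_invariant_mean_piecewise_translate[OF mean T]) (auto simp: inj_on_def)
  have "Img True \<inter> Img False = {}"
    using f(1) by (auto simp: Img_def inj_on_def)
  then have "\<mu> (Img True \<union> Img False) = 2"
    using mean Img_carrier Img_mean by (simp add: left_invariant_mean_def)
  moreover have "\<mu> (carrier G) = \<mu> (Img True \<union> Img False) + \<mu> (carrier G - (Img True \<union> Img False))"
    using mean Img_carrier unfolding left_invariant_mean_def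
    by (metis Diff_disjoint Diff_partition Diff_subset Un_least)
  moreover have "\<mu> (carrier G - (Img True \<union> Img False)) \<ge> 0"
    using mean by (simp add: left_invariant_mean_def)
  ultimately show False
    using mean by (simp add: left_invariant_mean_def)
qed

lemma left_invariant_mean_doubling:
  assumes mean: "left_invariant_mean G \<mu>" and T: "finite T" "T \<subseteq> carrier G"
  obtains A where "finite A" "A \<noteq> {}" "A \<subseteq> carrier G" "card (T <#> A) \<le> 2 * card A"
proof -
  have "\<exists>A. finite A \<and> A \<noteq> {} \<and> A \<subseteq> carrier G \<and> card (T <#> A) \<le> 2 * card A"
  proof (rule ccontr)
    assume "\<nexists>A. finite A \<and> A \<noteq> {} \<and> A \<subseteq> carrier G \<and> card (T <#> A) \<le> 2 * card A"
    then show False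
      by (intro left_invariant_mean_not_expanding[OF mean T]) (auto simp: not_le)
  qed
  then show thesis
    using that by blast
qed

lemma set_inv_eq_image: "set_inv A = m_inv G ` A"
  unfolding SET_INV_def by auto

lemma set_inv_set_mult:
  assumes "A \<subseteq> carrier G" "B \<subseteq> carrier G"
  shows "set_inv (A <#> B) = set_inv B <#> set_inv A"
  unfolding set_inv_eq_image
proof (intro equalityI subsetI)
  fix x assume "x \<in> m_inv G ` (A <#> B)"
  then obtain a b where ab: "a \<in> A" "b \<in> B" "x = inv (a \<otimes> b)"
    unfolding set_mult_def by blast
  then have "x = inv b \<otimes> inv a"
    using assms by (simp add: inv_mult_group subset_iff)
  with ab(1,2) show "x \<in> m_inv G ` B <#> m_inv G ` A"
    unfolding set_mult_def by blast
next
  fix x assume "x \<in> m_inv G ` B <#> m_inv G ` A"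
  then obtain a b where ab: "a \<in> A" "b \<in> B" "x = inv b \<otimes> inv a"
    unfolding set_mult_def by blast
  then have "x = inv (a \<otimes> b)"
    using assms by (simp add: inv_mult_group subset_iff)
  with ab(1,2) show "x \<in> m_inv G ` (A <#> B)"
    unfolding set_mult_def by blast
qed

lemma set_inv_set_inv: "A \<subseteq> carrier G \<Longrightarrow> set_inv (set_inv A) = A"
  unfolding set_inv_eq_image by (force simp: subset_iff)

lemma set_inv_carrier: "A \<subseteq> carrier G \<Longrightarrow> set_inv A \<subseteq> carrier G"
  unfolding set_inv_eq_image by auto

lemma card_set_inv: "A \<subseteq> carrier G \<Longrightarrow> card (set_inv A) = card A"
  unfolding set_inv_eq_image by (rule card_image[OF inj_on_subset[OF inv_inj]])

end

definition doubling_sets :: "('a, 'b) monoid_scheme \<Rightarrow> 'a set \<Rightarrow> bool" where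
  "doubling_sets G N \<longleftrightarrow> (\<forall>T. finite T \<and> T \<subseteq> N \<longrightarrow>
     (\<exists>A. finite A \<and> A \<noteq> {} \<and> A \<subseteq> N \<and> card (A <#>\<^bsub>G\<^esub> T) \<le> 2 * card A))"

text \<open>The mean is left invariant, whereas sets doubling under right multiplication are needed;
  inversion swaps the two sides.\<close>
lemma (in group) amenable_doubling_sets:
  assumes "amenable_group G"
  shows "doubling_sets G (carrier G)"
  unfolding doubling_sets_def
proof (intro allI impI)
  fix T assume T: "finite T \<and> T \<subseteq> carrier G"
  obtain \<mu> where mean: "left_invariant_mean G \<mu>"
    using assms amenable_group_iff_left_invariant_mean by blast
  have T_inv: "finite (set_inv T)" "set_inv T \<subseteq> carrier G"
    using T set_inv_carrier by (simp_all add: set_inv_eq_image)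
  obtain A where A: "finite A" "A \<noteq> {}" "A \<subseteq> carrier G" "card (set_inv T <#> A) \<le> 2 * card A"
    using left_invariant_mean_doubling[OF mean T_inv] by blast
  have "set_inv A <#> T = set_inv (set_inv T <#> A)"
    using A(3) T T_inv(2) by (simp add: set_inv_set_mult set_inv_set_inv)
  also have "card \<dots> = card (set_inv T <#> A)"
    using A(3) T_inv(2) by (simp add: card_set_inv set_mult_closed)
  finally have "card (set_inv A <#> T) \<le> 2 * card (set_inv A)"
    using A(3,4) by (simp add: card_set_inv)
  moreover have "finite (set_inv A)" "set_inv A \<noteq> {}" "set_inv A \<subseteq> carrier G"
    using A(1-3) set_inv_carrier by (auto simp: set_inv_eq_image)
  ultimately show "\<exists>A. finite A \<and> A \<noteq> {} \<and> A \<subseteq> carrier G \<and> card (A <#> T) \<le> 2 * card A"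
    by blast
qed

lemma doubling_sets_hom_image:
  assumes "\<iota> \<in> hom H G" "inj_on \<iota> (carrier H)" "doubling_sets H (carrier H)"
  shows "doubling_sets G (\<iota> ` carrier H)"
  unfolding doubling_sets_def
proof (intro allI impI)
  fix T assume T: "finite T \<and> T \<subseteq> \<iota> ` carrier H"
  define T0 where "T0 = \<iota> -` T \<inter> carrier H"
  have T0: "finite T0" "T0 \<subseteq> carrier H" "\<iota> ` T0 = T"
    using T finite_vimage_IntI[of T \<iota> "carrier H"] assms(2) by (auto simp: T0_def)
  obtain A0 where A0: "finite A0" "A0 \<noteq> {}" "A0 \<subseteq> carrier H"
    "card (A0 <#>\<^bsub>H\<^esub> T0) \<le> 2 * card A0"
    using assms(3) T0(1,2) unfolding doubling_sets_def by blast
  have "\<iota> ` A0 <#>\<^bsub>G\<^esub> T = \<iota> ` (A0 <#>\<^bsub>H\<^esub> T0)"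
    using set_mult_hom[OF assms(1) A0(3) T0(2)] T0(3) by simp
  then have "card (\<iota> ` A0 <#>\<^bsub>G\<^esub> T) \<le> card (A0 <#>\<^bsub>H\<^esub> T0)"
    using card_image_le[OF finite_set_mult[OF A0(1) T0(1)]] by simp
  also have "\<dots> \<le> 2 * card (\<iota> ` A0)"
    using A0(4) card_image[OF inj_on_subset[OF assms(2) A0(3)]] by simp
  finally show "\<exists>A. finite A \<and> A \<noteq> {} \<and> A \<subseteq> \<iota> ` carrier H \<and> card (A <#>\<^bsub>G\<^esub> T) \<le> 2 * card A"
    using A0(1-3) by blast
qed

lemma is_walk_iff_successively:
  "is_walk V E xs \<longleftrightarrow> xs \<noteq> [] \<and> set xs \<subseteq> V \<and> successively E xs"
  by (simp add: is_walk_def successively_conv_nth)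

lemma is_walk_Cons:
  "is_walk V E (x # xs) \<longleftrightarrow> x \<in> V \<and> (xs = [] \<or> E x (hd xs) \<and> is_walk V E xs)"
  by (auto simp: is_walk_iff_successively successively_Cons)

lemma dist_le_mem:
  "dist_le V E u v k \<Longrightarrow> u \<in> V \<and> v \<in> V"
  unfolding dist_le_def is_walk_def by (metis hd_in_set last_in_set subsetD)

lemma successively_remdups_adj_reflclp:
  "successively (\<lambda>x y. x = y \<or> E x y) xs \<Longrightarrow> successively E (remdups_adj xs)"
  by (induction xs rule: remdups_adj.induct) (auto simp: successively_Cons)

lemma walk_len_remdups_adj_le: "walk_len (remdups_adj xs) \<le> walk_len xs"
  unfolding walk_len_def using remdups_adj_length[of xs] by linarith

primrec cayley_ball :: "('a, 'b) monoid_scheme \<Rightarrow> 'a set \<Rightarrow> nat \<Rightarrow> 'a set" where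
  "cayley_ball G S 0 = {\<one>\<^bsub>G\<^esub>}"
| "cayley_ball G S (Suc r) = cayley_ball G S r \<union> (cayley_ball G S r <#>\<^bsub>G\<^esub> S)"

lemma finite_cayley_ball: "finite S \<Longrightarrow> finite (cayley_ball G S r)"
  by (induction r) (simp_all add: set_mult_def)

lemma cayley_ball_mono: "r \<le> r' \<Longrightarrow> cayley_ball G S r \<subseteq> cayley_ball G S r'"
  by (rule lift_Suc_mono_le[of "cayley_ball G S"]) auto

lemma (in monoid) cayley_ball_carrier: "S \<subseteq> carrier G \<Longrightarrow> cayley_ball G S r \<subseteq> carrier G"
  by (induction r) (auto simp: set_mult_def)

lemma (in monoid) walk_nth_in_cayley_ball:
  assumes S: "S \<subseteq> carrier G" and walk: "is_walk (carrier G) (cayley_adj G S) xs"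
  shows "j < length xs \<Longrightarrow> \<exists>w\<in>cayley_ball G S j. xs ! j = hd xs \<otimes> w"
proof (induction j)
  case 0
  have "hd xs \<in> carrier G"
    using walk hd_in_set by (auto simp: is_walk_iff_successively)
  then show ?case
    using walk by (simp add: hd_conv_nth is_walk_def)
next
  case (Suc j)
  then obtain w where w: "w \<in> cayley_ball G S j" "xs ! j = hd xs \<otimes> w"
    by auto
  obtain s where s: "s \<in> S" "xs ! Suc j = xs ! j \<otimes> s"
    using walk Suc.prems unfolding is_walk_def cayley_adj_def by blast
  have "hd xs \<in> carrier G" "w \<in> carrier G" "s \<in> carrier G"
    using walk hd_in_set cayley_ball_carrier[OF S] w(1) s(1) S by (auto simp: is_walk_iff_successively)
  then have "xs ! Suc j = hd xs \<otimes> (w \<otimes> s)"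
    using s(2) w(2) by (simp add: m_assoc)
  moreover have "w \<otimes> s \<in> cayley_ball G S (Suc j)"
    using w(1) s(1) by (auto simp: set_mult_def)
  ultimately show ?case
    by blast
qed

fun lift_walk :: "('g, 'c) monoid_scheme \<Rightarrow> ('k, 'd) monoid_scheme \<Rightarrow> ('k \<Rightarrow> 'g) \<Rightarrow> 'g \<Rightarrow> 'k list \<Rightarrow> 'g list"
  where
    "lift_walk G K \<sigma> g (x # y # ys) = g # lift_walk G K \<sigma> (g \<otimes>\<^bsub>G\<^esub> \<sigma> (inv\<^bsub>K\<^esub> x \<otimes>\<^bsub>K\<^esub> y)) (y # ys)"
  | "lift_walk G K \<sigma> g _ = [g]"

lemma hd_lift_walk [simp]: "hd (lift_walk G K \<sigma> g xs) = g"
  by (induction G K \<sigma> g xs rule: lift_walk.induct) simp_all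

lemma lift_walk_not_Nil [simp]: "lift_walk G K \<sigma> g xs \<noteq> []"
  by (induction G K \<sigma> g xs rule: lift_walk.induct) simp_all

lemma length_lift_walk: "length (lift_walk G K \<sigma> g xs) = max 1 (length xs)"
  by (induction G K \<sigma> g xs rule: lift_walk.induct) simp_all

lemma walk_len_lift_walk [simp]: "walk_len (lift_walk G K \<sigma> g xs) = walk_len xs"
  by (simp add: walk_len_def length_lift_walk)

lemma (in monoid) lift_walk_translate:
  assumes "\<And>x. \<sigma> x \<in> carrier G" "g \<in> carrier G" "h \<in> carrier G"
  shows "lift_walk G K \<sigma> (h \<otimes> g) xs = map ((\<otimes>) h) (lift_walk G K \<sigma> g xs)"
  using assms(2)
proof (induction xs arbitrary: g rule: induct_list012)
  case (3 x y ys)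
  have "lift_walk G K \<sigma> (h \<otimes> g \<otimes> \<sigma> (inv\<^bsub>K\<^esub> x \<otimes>\<^bsub>K\<^esub> y)) (y # ys)
      = map ((\<otimes>) h) (lift_walk G K \<sigma> (g \<otimes> \<sigma> (inv\<^bsub>K\<^esub> x \<otimes>\<^bsub>K\<^esub> y)) (y # ys))"
    using "3.IH"(2) "3.prems" assms(1,3) by (simp add: m_assoc)
  then show ?case
    by simp
qed simp_all

section \<open>Lifting separating triples through a group extension\<close>

definition separating_triple ::
  "'a set \<Rightarrow> ('a \<Rightarrow> 'a \<Rightarrow> bool) \<Rightarrow> nat \<Rightarrow> nat \<Rightarrow> nat \<Rightarrow> 'a set \<Rightarrow> 'a set \<Rightarrow> 'a set \<Rightarrow> bool"
  where "separating_triple V E m k r U F W \<longleftrightarrow>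
    U \<subseteq> V \<and> F \<subseteq> V \<and> W \<subseteq> V \<and> finite U \<and> finite F \<and> finite W \<and>
    U \<inter> F = {} \<and> U \<inter> W = {} \<and> F \<inter> W = {} \<and> U \<noteq> {} \<and> card U \<ge> m * card F \<and>
    (\<exists>\<mu>. bij_betw \<mu> U W \<and> (\<forall>u\<in>U. dist_le V E u (\<mu> u) k)) \<and>
    (\<forall>xs. is_walk V E xs \<and> hd xs \<in> U \<and> last xs \<in> W \<longrightarrow> set xs \<inter> F \<noteq> {} \<or> walk_len xs \<ge> r)"

lemma extraterrestrial_iff_separating_triple:
  "extraterrestrial V E \<longleftrightarrow> (\<forall>m. \<exists>k. \<forall>r. \<exists>U F W. separating_triple V E m k r U F W)"
  unfolding extraterrestrial_def separating_triple_def ..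

locale cayley_extension = group_hom \<Gamma> K \<pi>
  for \<Gamma> :: "('g, 'c) monoid_scheme" (structure) and K :: "('k, 'd) monoid_scheme" (structure)
    and \<pi> +
  fixes SK :: "'k set" and S :: "'g set" and \<sigma> :: "'k \<Rightarrow> 'g"
  assumes SK_carrier: "SK \<subseteq> carrier K"
    and S_carrier: "S \<subseteq> carrier \<Gamma>"
    and S_finite: "finite S"
    and S_image: "\<pi> ` S \<subseteq> insert \<one>\<^bsub>K\<^esub> SK"
    and section_carrier: "\<sigma> x \<in> carrier \<Gamma>"
    and section_inverse: "x \<in> carrier K \<Longrightarrow> \<pi> (\<sigma> x) = x"
    and section_generators: "\<sigma> ` SK \<subseteq> S"
begin

lemma lift_walk_is_walk:
  "is_walk (carrier K) (cayley_adj K SK) xs \<Longrightarrow> g \<in> carrier \<Gamma> \<Longrightarrow>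
    is_walk (carrier \<Gamma>) (cayley_adj \<Gamma> S) (lift_walk \<Gamma> K \<sigma> g xs)"
proof (induction xs arbitrary: g rule: induct_list012)
  case (3 x y ys)
  have x: "x \<in> carrier K" and "cayley_adj K SK x y"
    and walk: "is_walk (carrier K) (cayley_adj K SK) (y # ys)"
    using "3.prems"(1) by (simp_all add: is_walk_Cons)
  then obtain s where s: "s \<in> SK" "y = x \<otimes>\<^bsub>K\<^esub> s"
    by (auto simp: cayley_adj_def)
  have "inv\<^bsub>K\<^esub> x \<otimes>\<^bsub>K\<^esub> y = s"
    using s x SK_carrier by (auto simp: H.m_assoc[symmetric])
  moreover have "\<sigma> s \<in> S"
    using s(1) section_generators by blast
  ultimately show ?case
    using "3.IH"(2)[OF walk] "3.prems"(2) section_carrier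
    by (auto simp: is_walk_Cons cayley_adj_def)
qed (auto simp: is_walk_def)

lemma lift_walk_last:
  "set xs \<subseteq> carrier K \<Longrightarrow> xs \<noteq> [] \<Longrightarrow> g \<in> carrier \<Gamma> \<Longrightarrow>
    \<pi> (last (lift_walk \<Gamma> K \<sigma> g xs)) = \<pi> g \<otimes>\<^bsub>K\<^esub> (inv\<^bsub>K\<^esub> hd xs \<otimes>\<^bsub>K\<^esub> last xs)"
proof (induction xs arbitrary: g rule: induct_list012)
  case (3 x y ys)
  have x: "x \<in> carrier K" and y: "y \<in> carrier K" and l: "last (y # ys) \<in> carrier K"
    using "3.prems"(1) by auto
  have "\<pi> (last (lift_walk \<Gamma> K \<sigma> g (x # y # ys)))
      = \<pi> (g \<otimes> \<sigma> (inv\<^bsub>K\<^esub> x \<otimes>\<^bsub>K\<^esub> y)) \<otimes>\<^bsub>K\<^esub> (inv\<^bsub>K\<^esub> y \<otimes>\<^bsub>K\<^esub> last (y # ys))"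
    using "3.IH"(2) "3.prems" section_carrier by simp
  also have "\<dots> = \<pi> g \<otimes>\<^bsub>K\<^esub> (inv\<^bsub>K\<^esub> x \<otimes>\<^bsub>K\<^esub> (y \<otimes>\<^bsub>K\<^esub> (inv\<^bsub>K\<^esub> y \<otimes>\<^bsub>K\<^esub> last (y # ys))))"
    using x y l "3.prems"(3) section_carrier section_inverse by (simp add: H.m_assoc)
  finally show ?case
    using y l by (simp add: H.m_assoc[symmetric])
qed simp_all

lemma project_walk:
  assumes "is_walk (carrier \<Gamma>) (cayley_adj \<Gamma> S) xs"
  shows "is_walk (carrier K) (cayley_adj K SK) (remdups_adj (map \<pi> xs))"
proof -
  have step: "\<pi> x = \<pi> y \<or> cayley_adj K SK (\<pi> x) (\<pi> y)"
    if x: "x \<in> carrier \<Gamma>" and adj: "cayley_adj \<Gamma> S x y" for x y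
  proof -
    obtain s where "s \<in> S" "y = x \<otimes> s"
      using adj by (auto simp: cayley_adj_def)
    then have "\<pi> y = \<pi> x \<otimes>\<^bsub>K\<^esub> \<pi> s" "\<pi> s \<in> insert \<one>\<^bsub>K\<^esub> SK"
      using x S_carrier S_image by auto
    then show ?thesis
      using x by (auto simp: cayley_adj_def)
  qed
  have xs: "xs \<noteq> []" "set xs \<subseteq> carrier \<Gamma>" "successively (cayley_adj \<Gamma> S) xs"
    using assms by (simp_all add: is_walk_iff_successively)
  have "successively (\<lambda>a b. \<pi> a = \<pi> b \<or> cayley_adj K SK (\<pi> a) (\<pi> b)) xs"
    using xs(3) by (rule successively_mono) (use step xs(2) in blast)
  then have "successively (cayley_adj K SK) (remdups_adj (map \<pi> xs))"
    by (intro successively_remdups_adj_reflclp) (simp add: successively_map)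
  then show ?thesis
    using xs by (auto simp: is_walk_iff_successively)
qed

lemma lifted_matching:
  assumes \<mu>: "bij_betw \<mu> U W"
    and dist: "\<And>u. u \<in> U \<Longrightarrow> dist_le (carrier K) (cayley_adj K SK) u (\<mu> u) k"
    and U': "U' \<subseteq> carrier \<Gamma>" "\<pi> ` U' \<subseteq> U"
  obtains \<mu>' where "bij_betw \<mu>' U' (\<mu>' ` U')" "\<mu>' ` U' \<subseteq> carrier \<Gamma>" "\<pi> ` \<mu>' ` U' \<subseteq> W"
    and "\<And>\<gamma>. \<gamma> \<in> U' \<Longrightarrow> dist_le (carrier \<Gamma>) (cayley_adj \<Gamma> S) \<gamma> (\<mu>' \<gamma>) k"
proof -
  obtain p where p: "\<And>u. u \<in> U \<Longrightarrow> is_walk (carrier K) (cayley_adj K SK) (p u) \<and>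
      hd (p u) = u \<and> last (p u) = \<mu> u \<and> walk_len (p u) \<le> k"
    using dist unfolding dist_le_def by metis
  define \<mu>' where "\<mu>' \<gamma> = last (lift_walk \<Gamma> K \<sigma> \<gamma> (p (\<pi> \<gamma>)))" for \<gamma>
  have \<gamma>: "\<gamma> \<in> carrier \<Gamma>" "\<pi> \<gamma> \<in> U" if "\<gamma> \<in> U'" for \<gamma>
    using that U' by blast+
  have dist': "dist_le (carrier \<Gamma>) (cayley_adj \<Gamma> S) \<gamma> (\<mu>' \<gamma>) k" if "\<gamma> \<in> U'" for \<gamma>
    unfolding dist_le_def \<mu>'_def using lift_walk_is_walk \<gamma>[OF that] p[OF \<gamma>(2)[OF that]]
    by (intro exI[of _ "lift_walk \<Gamma> K \<sigma> \<gamma> (p (\<pi> \<gamma>))"]) simp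
  have image: "\<pi> (\<mu>' \<gamma>) = \<mu> (\<pi> \<gamma>)" if "\<gamma> \<in> U'" for \<gamma>
  proof -
    have "set (p (\<pi> \<gamma>)) \<subseteq> carrier K" "p (\<pi> \<gamma>) \<noteq> []" "\<mu> (\<pi> \<gamma>) \<in> carrier K"
      using p[OF \<gamma>(2)[OF that]] dist[OF \<gamma>(2)[OF that], THEN dist_le_mem] by (auto simp: is_walk_def)
    then show ?thesis
      using lift_walk_last \<gamma>[OF that] p[OF \<gamma>(2)[OF that]] by (simp add: \<mu>'_def H.m_assoc[symmetric])
  qed
  have translate: "\<mu>' \<gamma> = \<gamma> \<otimes> last (lift_walk \<Gamma> K \<sigma> \<one> (p (\<pi> \<gamma>)))" if "\<gamma> \<in> carrier \<Gamma>" for \<gamma>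
  proof -
    have "lift_walk \<Gamma> K \<sigma> (\<gamma> \<otimes> \<one>) (p (\<pi> \<gamma>)) = map ((\<otimes>) \<gamma>) (lift_walk \<Gamma> K \<sigma> \<one> (p (\<pi> \<gamma>)))"
      by (rule G.lift_walk_translate[OF section_carrier G.one_closed that])
    then show ?thesis
      using that by (simp add: \<mu>'_def last_map)
  qed
  have "inj_on \<mu>' U'"
  proof (rule inj_onI)
    fix \<gamma>1 \<gamma>2 assume \<gamma>12: "\<gamma>1 \<in> U'" "\<gamma>2 \<in> U'" and eq: "\<mu>' \<gamma>1 = \<mu>' \<gamma>2"
    then have "\<mu> (\<pi> \<gamma>1) = \<mu> (\<pi> \<gamma>2)"
      using image by metis
    then have "\<pi> \<gamma>1 = \<pi> \<gamma>2"
      using inj_onD[OF bij_betw_imp_inj_on[OF \<mu>]] \<gamma> \<gamma>12 by blast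
    moreover have "last (lift_walk \<Gamma> K \<sigma> \<one> (p (\<pi> \<gamma>1))) \<in> carrier \<Gamma>"
      using lift_walk_is_walk[of "p (\<pi> \<gamma>1)" \<one>] p \<gamma>[OF \<gamma>12(1)] by (auto simp: is_walk_def)
    ultimately show "\<gamma>1 = \<gamma>2"
      using eq \<gamma> \<gamma>12 translate by simp
  qed
  moreover have "\<mu>' ` U' \<subseteq> carrier \<Gamma>" "\<pi> ` \<mu>' ` U' \<subseteq> W"
    using dist'[THEN dist_le_mem] image \<gamma> bij_betwE[OF \<mu>] by auto
  ultimately show thesis
    using that dist' inj_on_imp_bij_betw by blast
qed

definition section_defect :: "'k \<Rightarrow> 'g \<Rightarrow> 'g" where
  "section_defect u w = \<sigma> u \<otimes> w \<otimes> inv (\<sigma> (u \<otimes>\<^bsub>K\<^esub> \<pi> w))"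

lemma section_defect_in_kernel:
  "u \<in> carrier K \<Longrightarrow> w \<in> carrier \<Gamma> \<Longrightarrow> section_defect u w \<in> kernel \<Gamma> K \<pi>"
  unfolding section_defect_def kernel_def using section_carrier section_inverse by simp

lemma section_mult_eq:
  "u \<in> carrier K \<Longrightarrow> w \<in> carrier \<Gamma> \<Longrightarrow> \<sigma> u \<otimes> w = section_defect u w \<otimes> \<sigma> (u \<otimes>\<^bsub>K\<^esub> \<pi> w)"
  unfolding section_defect_def using section_carrier by (simp add: G.m_assoc)

lemma kernel_mult_section:
  assumes "a \<in> kernel \<Gamma> K \<pi>" "x \<in> carrier K"
  shows "a \<otimes> \<sigma> x \<in> carrier \<Gamma>" "\<pi> (a \<otimes> \<sigma> x) = x"
  using assms section_carrier section_inverse by (simp_all add: kernel_def)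

lemma mem_kernel_section_set:
  assumes "A \<subseteq> kernel \<Gamma> K \<pi>" "B \<subseteq> carrier K" "\<gamma> \<in> A <#> \<sigma> ` B"
  shows "\<gamma> \<in> carrier \<Gamma>" "\<pi> \<gamma> \<in> B"
proof -
  obtain a x where ax: "a \<in> A" "x \<in> B" "\<gamma> = a \<otimes> \<sigma> x"
    using assms(3) unfolding set_mult_def by blast
  then have "a \<in> kernel \<Gamma> K \<pi>" "x \<in> carrier K"
    using assms(1,2) by blast+
  then show "\<gamma> \<in> carrier \<Gamma>" "\<pi> \<gamma> \<in> B"
    using kernel_mult_section ax by simp_all
qed

lemma card_kernel_section_set:
  assumes "A \<subseteq> kernel \<Gamma> K \<pi>" "B \<subseteq> carrier K"
  shows "card (A <#> \<sigma> ` B) = card A * card B"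
proof -
  have "inj_on (\<lambda>(a, x). a \<otimes> \<sigma> x) (A \<times> B)"
  proof (rule inj_onI, clarify)
    fix a x a' x' assume ax: "a \<in> A" "x \<in> B" "a' \<in> A" "x' \<in> B" and eq: "a \<otimes> \<sigma> x = a' \<otimes> \<sigma> x'"
    have "\<pi> (a \<otimes> \<sigma> x) = x" "\<pi> (a' \<otimes> \<sigma> x') = x'"
      using ax assms by (simp_all add: kernel_mult_section subsetD)
    then have "x = x'"
      using eq by simp
    moreover have "a \<in> carrier \<Gamma>" "a' \<in> carrier \<Gamma>"
      using ax(1,3) assms(1) by (auto simp: kernel_def)
    ultimately show "a = a' \<and> x = x'"
      using eq section_carrier by simp
  qed
  moreover have "A <#> \<sigma> ` B = (\<lambda>(a, x). a \<otimes> \<sigma> x) ` (A \<times> B)"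
    unfolding set_mult_def by auto
  ultimately show ?thesis
    by (simp add: card_image card_cartesian_product)
qed

lemma kernel_section_set_mult_right:
  assumes A: "A \<subseteq> kernel \<Gamma> K \<pi>" and U: "U \<subseteq> carrier K" and P: "P \<subseteq> carrier \<Gamma>"
    and \<gamma>: "\<gamma> \<in> A <#> \<sigma> ` U" and w: "w \<in> P" and F: "\<pi> (\<gamma> \<otimes> w) \<in> F"
  shows "\<gamma> \<otimes> w \<in> (A <#> case_prod section_defect ` (U \<times> P)) <#> \<sigma> ` F"
proof -
  obtain a u where au: "a \<in> A" "u \<in> U" "\<gamma> = a \<otimes> \<sigma> u"
    using \<gamma> unfolding set_mult_def by blast
  have a: "a \<in> carrier \<Gamma>" "\<pi> a = \<one>\<^bsub>K\<^esub>" and u: "u \<in> carrier K" and "w \<in> carrier \<Gamma>"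
    using au A U P w by (auto simp: kernel_def)
  then have "\<gamma> \<otimes> w = (a \<otimes> section_defect u w) \<otimes> \<sigma> (u \<otimes>\<^bsub>K\<^esub> \<pi> w)"
    using au(3) section_carrier section_defect_in_kernel
    by (simp add: G.m_assoc section_mult_eq kernel_def)
  moreover have "\<pi> (\<gamma> \<otimes> w) = u \<otimes>\<^bsub>K\<^esub> \<pi> w"
    using a u \<open>w \<in> carrier \<Gamma>\<close> au(3) section_carrier section_inverse by simp
  ultimately show ?thesis
    using au(1,2) w F unfolding set_mult_def by force
qed

definition defects :: "'k set \<Rightarrow> nat \<Rightarrow> 'g set" where
  "defects U r = case_prod section_defect ` (U \<times> cayley_ball \<Gamma> S r)"

lemma finite_defects: "finite U \<Longrightarrow> finite (defects U r)"
  unfolding defects_def by (intro finite_imageI finite_cartesian_product finite_cayley_ball S_finite)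

lemma defects_kernel: "U \<subseteq> carrier K \<Longrightarrow> defects U r \<subseteq> kernel \<Gamma> K \<pi>"
  unfolding defects_def using G.cayley_ball_carrier[OF S_carrier]
  by (auto intro!: section_defect_in_kernel)

lemma short_walk_meets_lifted_barrier:
  assumes A: "A \<subseteq> kernel \<Gamma> K \<pi>" and U: "U \<subseteq> carrier K"
    and blocks: "\<forall>ys. is_walk (carrier K) (cayley_adj K SK) ys \<and> hd ys \<in> U \<and> last ys \<in> W \<longrightarrow>
      set ys \<inter> F \<noteq> {} \<or> walk_len ys \<ge> r"
    and walk: "is_walk (carrier \<Gamma>) (cayley_adj \<Gamma> S) xs" and hd: "hd xs \<in> A <#> \<sigma> ` U"
    and last: "\<pi> (last xs) \<in> W" and short: "walk_len xs < r"
  shows "set xs \<inter> ((A <#> defects U r) <#> \<sigma> ` F) \<noteq> {}"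
proof -
  let ?ys = "remdups_adj (map \<pi> xs)"
  have "xs \<noteq> []"
    using walk by (simp add: is_walk_def)
  then have "hd ?ys \<in> U" "last ?ys \<in> W"
    using mem_kernel_section_set(2)[OF A U hd] last by (simp_all add: hd_map last_map)
  moreover have "walk_len ?ys < r"
    using walk_len_remdups_adj_le[of "map \<pi> xs"] short by (simp add: walk_len_def)
  moreover have "set ?ys \<inter> F \<noteq> {} \<or> walk_len ?ys \<ge> r"
    using blocks project_walk[OF walk] \<open>hd ?ys \<in> U\<close> \<open>last ?ys \<in> W\<close> by blast
  ultimately have "set ?ys \<inter> F \<noteq> {}"
    by linarith
  then obtain z where "z \<in> set xs" "\<pi> z \<in> F"
    by auto
  then obtain j where j: "j < length xs" "\<pi> (xs ! j) \<in> F"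
    using in_set_conv_nth[of z xs] by blast
  then obtain w where w: "w \<in> cayley_ball \<Gamma> S j" "xs ! j = hd xs \<otimes> w"
    using G.walk_nth_in_cayley_ball[OF S_carrier walk] by blast
  have "j \<le> r"
    using j(1) short by (simp add: walk_len_def)
  then have "w \<in> cayley_ball \<Gamma> S r"
    using w(1) by (rule subsetD[OF cayley_ball_mono])
  moreover have "\<pi> (hd xs \<otimes> w) \<in> F"
    using j(2) w(2) by simp
  ultimately have "hd xs \<otimes> w \<in> (A <#> defects U r) <#> \<sigma> ` F"
    unfolding defects_def by (rule kernel_section_set_mult_right[OF A U G.cayley_ball_carrier[OF S_carrier] hd])
  moreover have "hd xs \<otimes> w \<in> set xs"
    using nth_mem[OF j(1)] w(2) by simp
  ultimately show ?thesis
    by blast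
qed

lemma separating_triple_lift:
  assumes triple: "separating_triple (carrier K) (cayley_adj K SK) (2 * m) k r U F W"
    and doubling: "doubling_sets \<Gamma> (kernel \<Gamma> K \<pi>)"
  shows "\<exists>U' F' W'. separating_triple (carrier \<Gamma>) (cayley_adj \<Gamma> S) m k r U' F' W'"
proof -
  obtain \<mu> where U: "U \<subseteq> carrier K" "finite U" "U \<noteq> {}" and F: "F \<subseteq> carrier K" "finite F"
    and disjoint: "U \<inter> F = {}" "U \<inter> W = {}" "F \<inter> W = {}"
    and card: "card U \<ge> 2 * m * card F" and \<mu>: "bij_betw \<mu> U W"
    and dist: "\<forall>u\<in>U. dist_le (carrier K) (cayley_adj K SK) u (\<mu> u) k"
    and blocks: "\<forall>ys. is_walk (carrier K) (cayley_adj K SK) ys \<and> hd ys \<in> U \<and> last ys \<in> W \<longrightarrow>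
      set ys \<inter> F \<noteq> {} \<or> walk_len ys \<ge> r"
    using triple unfolding separating_triple_def by (elim exE conjE) (rule that)
  obtain A where A: "finite A" "A \<noteq> {}" "A \<subseteq> kernel \<Gamma> K \<pi>"
    and doubling_A: "card (A <#> defects U r) \<le> 2 * card A"
    using spec[OF doubling[unfolded doubling_sets_def], of "defects U r"]
      finite_defects[OF U(2)] defects_kernel[OF U(1)] by auto
  have "A <#> defects U r \<subseteq> kernel \<Gamma> K \<pi>"
    using mono_set_mult[OF A(3) defects_kernel[OF U(1)], of \<Gamma>] G.subgroup_mult_id[OF subgroup_kernel]
    by simp
  define U' where "U' = A <#> \<sigma> ` U"
  define F' where "F' = (A <#> defects U r) <#> \<sigma> ` F"
  have U': "U' \<subseteq> carrier \<Gamma>" "\<pi> ` U' \<subseteq> U"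
    using mem_kernel_section_set[OF A(3) U(1)] by (auto simp: U'_def)
  have F': "F' \<subseteq> carrier \<Gamma>" "\<pi> ` F' \<subseteq> F"
    using mem_kernel_section_set[OF \<open>A <#> defects U r \<subseteq> kernel \<Gamma> K \<pi>\<close> F(1)] by (auto simp: F'_def)
  obtain \<mu>' where \<mu>': "bij_betw \<mu>' U' (\<mu>' ` U')" "\<mu>' ` U' \<subseteq> carrier \<Gamma>" "\<pi> ` \<mu>' ` U' \<subseteq> W"
    and dist': "\<And>\<gamma>. \<gamma> \<in> U' \<Longrightarrow> dist_le (carrier \<Gamma>) (cayley_adj \<Gamma> S) \<gamma> (\<mu>' \<gamma>) k"
    using lifted_matching[OF \<mu> dist[rule_format] U'] by blast
  have "card F' \<le> card (A <#> defects U r) * card (\<sigma> ` F)"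
    unfolding F'_def using A(1) finite_defects[OF U(2)] F(2) by (simp add: card_set_mult_le finite_set_mult)
  also have "\<dots> \<le> 2 * card A * card F"
    using doubling_A card_image_le[OF F(2), of \<sigma>] by (rule mult_le_mono)
  finally have "m * card F' \<le> card A * (2 * m * card F)"
    by (simp add: algebra_simps)
  also have "\<dots> \<le> card A * card U"
    using card by simp
  also have "\<dots> = card U'"
    using card_kernel_section_set[OF A(3) U(1)] by (simp add: U'_def)
  finally have card': "m * card F' \<le> card U'" .
  have "separating_triple (carrier \<Gamma>) (cayley_adj \<Gamma> S) m k r U' F' (\<mu>' ` U')"
    unfolding separating_triple_def
  proof (intro conjI)
    show "U' \<noteq> {}" "finite U'" "finite F'" "finite (\<mu>' ` U')"
      using A(1,2) U(2,3) F(2) finite_defects[OF U(2)] by (auto simp: U'_def F'_def set_mult_def)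
    show "U' \<inter> F' = {}" "U' \<inter> \<mu>' ` U' = {}" "F' \<inter> \<mu>' ` U' = {}"
      using U'(2) F'(2) \<mu>'(3) disjoint by blast+
    show "\<exists>\<mu>. bij_betw \<mu> U' (\<mu>' ` U') \<and> (\<forall>u\<in>U'. dist_le (carrier \<Gamma>) (cayley_adj \<Gamma> S) u (\<mu> u) k)"
      using \<mu>'(1) dist' by blast
    show "\<forall>xs. is_walk (carrier \<Gamma>) (cayley_adj \<Gamma> S) xs \<and> hd xs \<in> U' \<and> last xs \<in> \<mu>' ` U' \<longrightarrow>
        set xs \<inter> F' \<noteq> {} \<or> r \<le> walk_len xs"
    proof (intro allI impI)
      fix xs assume xs: "is_walk (carrier \<Gamma>) (cayley_adj \<Gamma> S) xs \<and> hd xs \<in> U' \<and> last xs \<in> \<mu>' ` U'"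
      then have "\<pi> (last xs) \<in> W"
        using \<mu>'(3) by blast
      then show "set xs \<inter> F' \<noteq> {} \<or> r \<le> walk_len xs"
        using short_walk_meets_lifted_barrier[OF A(3) U(1) blocks] xs
        unfolding U'_def F'_def by (meson not_le)
    qed
  qed (use U'(1) F'(1) \<mu>'(2) card' in auto)
  then show ?thesis
    by blast
qed

theorem extraterrestrial_lift:
  assumes "extraterrestrial (carrier K) (cayley_adj K SK)" and "doubling_sets \<Gamma> (kernel \<Gamma> K \<pi>)"
  shows "extraterrestrial (carrier \<Gamma>) (cayley_adj \<Gamma> S)"
  unfolding extraterrestrial_iff_separating_triple
proof
  fix m
  obtain k where "\<forall>r. \<exists>U F W. separating_triple (carrier K) (cayley_adj K SK) (2 * m) k r U F W"
    using assms(1) unfolding extraterrestrial_iff_separating_triple by blast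
  then show "\<exists>k. \<forall>r. \<exists>U F W. separating_triple (carrier \<Gamma>) (cayley_adj \<Gamma> S) m k r U F W"
    using separating_triple_lift[OF _ assms(2)] by blast
qed

end

lemma (in group) finite_symmetric_generating_set_symmetrize:
  assumes "finite T" "T \<subseteq> carrier G" "generate G T = carrier G"
  shows "finite_symmetric_generating_set G (T \<union> m_inv G ` T)"
  unfolding finite_symmetric_generating_set_def
proof (intro conjI ballI)
  show "finite (T \<union> m_inv G ` T)" "T \<union> m_inv G ` T \<subseteq> carrier G"
    using assms(1,2) by auto
  show "inv s \<in> T \<union> m_inv G ` T" if "s \<in> T \<union> m_inv G ` T" for s
    using that assms(2) by auto
  show "generate G (T \<union> m_inv G ` T) = carrier G"
    using mono_generate[of T "T \<union> m_inv G ` T"] generate_incl[of "T \<union> m_inv G ` T"] assms(2,3)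
    by auto
qed

lemma (in group_hom) surj_section:
  assumes "h ` carrier G = carrier H"
  obtains \<sigma> where "\<And>x. \<sigma> x \<in> carrier G" "\<And>x. x \<in> carrier H \<Longrightarrow> h (\<sigma> x) = x"
proof
  show "(if x \<in> carrier H then inv_into (carrier G) h x else \<one>) \<in> carrier G" for x
    using assms by (auto intro: inv_into_into)
  show "h (if x \<in> carrier H then inv_into (carrier G) h x else \<one>) = x" if "x \<in> carrier H" for x
    using assms that by (simp add: f_inv_into_f)
qed

lemma (in group_hom) generate_kernel_corrections:
  assumes fg: "finitely_generated_group G" and L: "L \<subseteq> carrier G"
    and onto: "h ` generate G L = carrier H"
  obtains M where "finite M" "M \<subseteq> kernel G H h" "generate G (L \<union> M) = carrier G"
proof -
  obtain S0 where S0: "finite S0" "S0 \<subseteq> carrier G" "generate G S0 = carrier G"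
    using fg unfolding finitely_generated_group_def by blast
  have "\<forall>g\<in>carrier G. h g \<in> h ` generate G L"
    using onto by simp
  then have "\<forall>g\<in>carrier G. \<exists>v. v \<in> generate G L \<and> h v = h g"
    by (fastforce simp: image_iff)
  then obtain w where w: "\<And>g. g \<in> carrier G \<Longrightarrow> w g \<in> generate G L \<and> h (w g) = h g"
    using bchoice by metis
  have w_carrier: "w g \<in> carrier G" if "g \<in> carrier G" for g
    using w[OF that] G.generate_in_carrier[OF L] by blast
  define M where "M = (\<lambda>g. inv (w g) \<otimes> g) ` S0"
  have "M \<subseteq> kernel G H h"
    using S0(2) w w_carrier by (auto simp: M_def kernel_def)
  then have LM: "L \<union> M \<subseteq> carrier G"
    using L by (auto simp: kernel_def)
  have "S0 \<subseteq> generate G (L \<union> M)"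
  proof
    fix g assume g: "g \<in> S0"
    then have "g \<in> carrier G"
      using S0(2) by blast
    have "w g \<in> generate G (L \<union> M)"
      using w[OF \<open>g \<in> carrier G\<close>] G.mono_generate[of L "L \<union> M"] by blast
    moreover have "inv (w g) \<otimes> g \<in> generate G (L \<union> M)"
      using g by (auto simp: M_def intro: generate.incl)
    ultimately have "w g \<otimes> (inv (w g) \<otimes> g) \<in> generate G (L \<union> M)"
      by (rule generate.eng)
    then show "g \<in> generate G (L \<union> M)"
      using w_carrier[OF \<open>g \<in> carrier G\<close>] \<open>g \<in> carrier G\<close> by (simp add: G.m_assoc[symmetric])
  qed
  then have "generate G (L \<union> M) = carrier G"
    using G.generate_subgroup_incl[OF _ G.generate_is_subgroup[OF LM]] G.generate_incl[OF LM] S0(3)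
    by blast
  with S0(1) \<open>M \<subseteq> kernel G H h\<close> show thesis
    by (intro that) (simp_all add: M_def)
qed

lemma (in group_hom) generating_set_over:
  assumes fg: "finitely_generated_group G" and SK: "finite_symmetric_generating_set H SK"
    and \<sigma>: "\<And>x. \<sigma> x \<in> carrier G" "\<And>x. x \<in> carrier H \<Longrightarrow> h (\<sigma> x) = x"
  obtains S where "finite_symmetric_generating_set G S" "h ` S \<subseteq> insert \<one>\<^bsub>H\<^esub> SK" "\<sigma> ` SK \<subseteq> S"
proof -
  have SK_carrier: "SK \<subseteq> carrier H" and "finite SK" and SK_sym: "\<And>s. s \<in> SK \<Longrightarrow> inv\<^bsub>H\<^esub> s \<in> SK"
    and "generate H SK = carrier H"
    using SK by (auto simp: finite_symmetric_generating_set_def)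
  have L: "\<sigma> ` SK \<subseteq> carrier G" "h ` \<sigma> ` SK = SK"
    using \<sigma> SK_carrier by (auto simp: image_image subset_iff)
  then have "h ` generate G (\<sigma> ` SK) = carrier H"
    using generate_img[OF L(1)] \<open>generate H SK = carrier H\<close> by simp
  then obtain M where M: "finite M" "M \<subseteq> kernel G H h" "generate G (\<sigma> ` SK \<union> M) = carrier G"
    using generate_kernel_corrections[OF fg L(1)] by blast
  define T where "T = \<sigma> ` SK \<union> M"
  have T: "finite T" "T \<subseteq> carrier G"
    using \<open>finite SK\<close> M(1,2) L(1) by (auto simp: T_def kernel_def)
  have "h x \<in> insert \<one>\<^bsub>H\<^esub> SK \<and> h (inv x) \<in> insert \<one>\<^bsub>H\<^esub> SK" if x: "x \<in> T" for x
  proof -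
    have "x \<in> carrier G"
      using x T(2) by blast
    consider "h x \<in> SK" | "h x = \<one>\<^bsub>H\<^esub>"
      using x L(2) M(2) by (auto simp: T_def kernel_def)
    then show ?thesis
      using SK_sym \<open>x \<in> carrier G\<close> by cases simp_all
  qed
  then have "h ` (T \<union> m_inv G ` T) \<subseteq> insert \<one>\<^bsub>H\<^esub> SK"
    by blast
  moreover have "finite_symmetric_generating_set G (T \<union> m_inv G ` T)"
    using G.finite_symmetric_generating_set_symmetrize[OF T] M(3) by (simp add: T_def)
  moreover have "\<sigma> ` SK \<subseteq> T \<union> m_inv G ` T"
    by (auto simp: T_def)
  ultimately show thesis
    using that by blast
qed

theorem mainTheorem8:
  fixes H :: "('h, 'c) monoid_scheme" and \<Gamma> :: "('g, 'd) monoid_scheme"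
    and K :: "('k, 'e) monoid_scheme" and \<iota> :: "'h \<Rightarrow> 'g" and \<pi> :: "'g \<Rightarrow> 'k"
  assumes "group H" and "group \<Gamma>" and "group K"
    and "\<iota> \<in> hom H \<Gamma>" and "inj_on \<iota> (carrier H)"
    and "\<pi> \<in> hom \<Gamma> K" and "\<pi> ` carrier \<Gamma> = carrier K"
    and "\<iota> ` carrier H = kernel \<Gamma> K \<pi>"
    and "amenable_group H"
    and "finitely_generated_group \<Gamma>"
    and "extraterrestrial_group K"
  shows "extraterrestrial_group \<Gamma>"
proof -
  interpret group_hom \<Gamma> K \<pi>
    using assms(2,3,6) by (simp add: group_hom_def group_hom_axioms_def)
  obtain SK where SK: "finite_symmetric_generating_set K SK" "extraterrestrial (carrier K) (cayley_adj K SK)"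
    using assms(11) unfolding extraterrestrial_group_def by blast
  obtain \<sigma> where \<sigma>: "\<And>x. \<sigma> x \<in> carrier \<Gamma>" "\<And>x. x \<in> carrier K \<Longrightarrow> \<pi> (\<sigma> x) = x"
    using surj_section[OF assms(7)] by blast
  obtain S where S: "finite_symmetric_generating_set \<Gamma> S" "\<pi> ` S \<subseteq> insert \<one>\<^bsub>K\<^esub> SK" "\<sigma> ` SK \<subseteq> S"
    using generating_set_over[OF assms(10) SK(1) \<sigma>] by blast
  interpret cayley_extension \<Gamma> K \<pi> SK S \<sigma>
    using S SK(1) \<sigma> by unfold_locales (auto simp: finite_symmetric_generating_set_def)
  have "doubling_sets \<Gamma> (kernel \<Gamma> K \<pi>)"
    using doubling_sets_hom_image[OF assms(4,5) group.amenable_doubling_sets[OF assms(1,9)]] assms(8)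
    by simp
  then have "extraterrestrial (carrier \<Gamma>) (cayley_adj \<Gamma> S)"
    by (rule extraterrestrial_lift[OF SK(2)])
  then show ?thesis
    using S(1) unfolding extraterrestrial_group_def by blast
qed

end
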